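(* For any $s>-1$ and any $\varepsilon>0$ there exists $\delta>0$ such that $$\int_0^{\delta}x\,J^{(s)}(x,x)\,dx<\varepsilon .$$
   Context: $J_s$ denotes the Bessel function of the first kind of order $s$; $\tilde J_s(x,y)=\frac14\int_0^1 J_s(\sqrt{tx})J_s(\sqrt{ty})\,dt$ is the Bessel kernel on $(0,+\infty)$. The modified Bessel kernel $J^{(s)}$ is the image of $\tilde J_s$ under the change of variable $y=4/x$: $$J^{(s)}(x_1,x_2)=\frac{4}{x_1x_2}\,\tilde J_s\!\left(\frac{4}{x_1},\frac{4}{x_2}\right),\qquad x_1,x_2>0.$$ *)

theory Defs
  imports "HOL-Analysis.Analysis"
begin

definition besselJ :: "real \<Rightarrow> real \<Rightarrow> real" where
  "besselJ s x = (\<Sum>m. (-1) ^ m / (fact m * Gamma (real m + s + 1)) * (x / 2) powr (2 * real m + s))"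

definition besselKernel :: "real \<Rightarrow> real \<Rightarrow> real \<Rightarrow> real" where
  "besselKernel s x y = (1/4) * integral {0..1} (\<lambda>t. besselJ s (sqrt (t * x)) * besselJ s (sqrt (t * y)))"

definition modBesselKernel :: "real \<Rightarrow> real \<Rightarrow> real \<Rightarrow> real" where
  "modBesselKernel s x1 x2 = 4 / (x1 * x2) * besselKernel s (4 / x1) (4 / x2)"

end

theory Submission
  imports Defs
begin

text \<open>Writing \<open>J_s(r) = (r/2)^s Q(r^2/4)\<close> with \<open>Q\<close> entire, \<open>x J^(s)(x,x)\<close> is the integral
  of \<open>F(v) = v^s Q(v)^2 = J_s(2 sqrt v)^2\<close> over \<open>[0, 1/x]\<close>. Near \<open>0\<close>, \<open>F(v) = O(v^s)\<close> is
  integrable because \<open>s > -1\<close>. For large \<open>v\<close>, an energy functional \<open>E\<close> for the ODE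
  \<open>u Q'' + (s+1) Q' + Q = 0\<close> with \<open>E' = O(E/u^2)\<close> keeps \<open>v^(s+1/2) Q(v)^2\<close> bounded, which is the
  classical decay \<open>J_s(r)^2 = O(1/r)\<close>. Hence \<open>\<integral>[0,R] F = O(sqrt R)\<close>, so
  \<open>x J^(s)(x,x) = O(x^(-1/2))\<close> on \<open>(0,1]\<close>, and its integral over \<open>[0,\<delta>]\<close> is \<open>O(sqrt \<delta>)\<close>.\<close>

definition bessel_coeff :: "real \<Rightarrow> nat \<Rightarrow> real" where
  "bessel_coeff s m = (-1) ^ m / (fact m * Gamma (real m + s + 1))"

definition bessel_series :: "real \<Rightarrow> real \<Rightarrow> real" where
  "bessel_series s u = (\<Sum>m. bessel_coeff s m * u ^ m)"

definition bessel_series' :: "real \<Rightarrow> real \<Rightarrow> real" where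
  "bessel_series' s u = (\<Sum>m. diffs (bessel_coeff s) m * u ^ m)"

definition bessel_series'' :: "real \<Rightarrow> real \<Rightarrow> real" where
  "bessel_series'' s u = (\<Sum>m. diffs (diffs (bessel_coeff s)) m * u ^ m)"

lemma bessel_coeff_Suc:
  assumes "s > -1"
  shows "bessel_coeff s (Suc n) = - bessel_coeff s n / ((real n + 1) * (real n + s + 1))"
proof -
  have "real n + s + 1 \<notin> \<int>\<^sub>\<le>\<^sub>0"
    using assms nonpos_Ints_nonpos by fastforce
  from Gamma_plus1[OF this]
  have "Gamma (real (Suc n) + s + 1) = (real n + s + 1) * Gamma (real n + s + 1)"
    by (simp add: algebra_simps)
  moreover have "Gamma (real n + s + 1) > 0" "real n + s + 1 > 0"
    using assms by simp_all
  ultimately show ?thesis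
    unfolding bessel_coeff_def by (simp add: field_simps)
qed

lemma summable_bessel_series:
  assumes "s > -1"
  shows "summable (\<lambda>m. bessel_coeff s m * u ^ m)"
proof (rule summable_ratio_test[where c = "1/2" and N = "nat \<lceil>2 * \<bar>u\<bar>\<rceil> + 1"])
  fix n assume n: "n \<ge> nat \<lceil>2 * \<bar>u\<bar>\<rceil> + 1"
  have "2 * \<bar>u\<bar> \<le> real n + 1"
    using n by linarith
  also have "\<dots> = (real n + 1) * 1"
    by simp
  also have "\<dots> \<le> (real n + 1) * (real n + s + 1)"
    using n assms by (intro mult_left_mono) auto
  finally have den: "2 * \<bar>u\<bar> \<le> (real n + 1) * (real n + s + 1)" .
  have pos: "(real n + 1) * (real n + s + 1) > 0"
    using assms by simp
  have "norm (bessel_coeff s (Suc n) * u ^ Suc n)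
      = \<bar>bessel_coeff s n * u ^ n\<bar> * (\<bar>u\<bar> / ((real n + 1) * (real n + s + 1)))"
    using pos by (simp add: bessel_coeff_Suc[OF assms] abs_mult field_simps)
  also have "\<dots> \<le> \<bar>bessel_coeff s n * u ^ n\<bar> * (1/2)"
    using den pos by (intro mult_left_mono) (auto simp: field_simps)
  finally show "norm (bessel_coeff s (Suc n) * u ^ Suc n) \<le> 1/2 * norm (bessel_coeff s n * u ^ n)"
    by simp
qed simp

lemma summable_bessel_series':
  "s > -1 \<Longrightarrow> summable (\<lambda>m. diffs (bessel_coeff s) m * u ^ m)"
  by (rule termdiff_converges_all) (rule summable_bessel_series)

lemma summable_bessel_series'':
  "s > -1 \<Longrightarrow> summable (\<lambda>m. diffs (diffs (bessel_coeff s)) m * u ^ m)"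
  by (rule termdiff_converges_all) (rule summable_bessel_series')

lemma has_real_derivative_bessel_series:
  "s > -1 \<Longrightarrow> (bessel_series s has_real_derivative bessel_series' s u) (at u)"
  unfolding bessel_series_def[abs_def] bessel_series'_def
  by (rule termdiffs_strong_converges_everywhere) (rule summable_bessel_series)

lemma has_real_derivative_bessel_series':
  "s > -1 \<Longrightarrow> (bessel_series' s has_real_derivative bessel_series'' s u) (at u)"
  unfolding bessel_series'_def[abs_def] bessel_series''_def
  by (rule termdiffs_strong_converges_everywhere) (rule summable_bessel_series')

lemma continuous_on_bessel_series: "s > -1 \<Longrightarrow> continuous_on A (bessel_series s)"
  by (meson DERIV_isCont has_real_derivative_bessel_series continuous_at_imp_continuous_on)

lemma bessel_series_ode:
  assumes "s > -1"
  shows "u * bessel_series'' s u + (s + 1) * bessel_series' s u + bessel_series s u = 0"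
proof -
  let ?c = "bessel_coeff s"
  define b where "b n = real n * (real n + 1) * ?c (Suc n) * u ^ n" for n
  have "(\<lambda>n. u * (diffs (diffs ?c) n * u ^ n)) sums (u * bessel_series'' s u)"
    unfolding bessel_series''_def by (intro sums_mult summable_sums summable_bessel_series'' assms)
  moreover have "u * (diffs (diffs ?c) n * u ^ n) = b (Suc n)" for n
    by (simp add: b_def diffs_def algebra_simps)
  ultimately have "(\<lambda>n. b (Suc n)) sums (u * bessel_series'' s u + b 0)"
    by (simp add: b_def)
  then have "b sums (u * bessel_series'' s u)"
    by (simp only: sums_Suc_iff) (simp add: b_def)
  moreover have "(\<lambda>n. (s + 1) * (diffs ?c n * u ^ n)) sums ((s + 1) * bessel_series' s u)"
    unfolding bessel_series'_def by (intro sums_mult summable_sums summable_bessel_series' assms)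
  moreover have "(\<lambda>n. ?c n * u ^ n) sums bessel_series s u"
    unfolding bessel_series_def by (intro summable_sums summable_bessel_series assms)
  ultimately have "(\<lambda>n. b n + (s + 1) * (diffs ?c n * u ^ n) + ?c n * u ^ n) sums
      (u * bessel_series'' s u + (s + 1) * bessel_series' s u + bessel_series s u)"
    by (intro sums_add)
  moreover have "b n + (s + 1) * (diffs ?c n * u ^ n) + ?c n * u ^ n = 0" for n
  proof -
    have "(real n + 1) * (real n + s + 1) \<noteq> 0"
      using assms by (simp add: add_pos_nonneg)
    then have "?c (Suc n) * ((real n + 1) * (real n + s + 1)) = - ?c n"
      by (simp add: bessel_coeff_Suc[OF assms])
    moreover have "b n + (s + 1) * (diffs ?c n * u ^ n) + ?c n * u ^ n
        = (?c (Suc n) * ((real n + 1) * (real n + s + 1)) + ?c n) * u ^ n"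
      by (simp add: b_def diffs_def algebra_simps)
    ultimately show ?thesis by simp
  qed
  ultimately show ?thesis
    using sums_unique sums_0 by fastforce
qed

lemma besselJ_eq_bessel_series:
  assumes "s > -1" and "r \<ge> 0"
  shows "besselJ s r = (r / 2) powr s * bessel_series s (r^2 / 4)"
proof (cases "r = 0")
  case True
  then show ?thesis by (simp add: besselJ_def)
next
  case False
  with assms have r: "r / 2 > 0" by simp
  have "(r / 2) powr (2 * real m + s) = (r / 2) powr s * (r^2 / 4) ^ m" for m
  proof -
    have "(r / 2) powr (2 * real m + s) = (r / 2) powr s * (r / 2) powr real (2 * m)"
      by (simp add: powr_add[symmetric] add.commute)
    also have "(r / 2) powr real (2 * m) = (r^2 / 4) ^ m"
      unfolding powr_realpow[OF r] by (simp add: power_mult power_divide)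
    finally show ?thesis .
  qed
  then have "besselJ s r = (\<Sum>m. (r / 2) powr s * (bessel_coeff s m * (r^2 / 4) ^ m))"
    unfolding besselJ_def bessel_coeff_def by (simp add: mult_ac)
  also have "\<dots> = (r / 2) powr s * bessel_series s (r^2 / 4)"
    unfolding bessel_series_def by (rule suminf_mult[OF summable_bessel_series[OF assms(1)]])
  finally show ?thesis .
qed

text \<open>The coefficients are chosen so that, by the ODE, all terms involving \<open>Q'\<close> cancel in the
  derivative.\<close>
definition bessel_energy :: "real \<Rightarrow> real \<Rightarrow> real" where
  "bessel_energy s u = u powr (s + 1/2) * (u * bessel_series' s u ^ 2
     + (s + 1/2) * bessel_series s u * bessel_series' s u
     + (1 + (2 * s + 1) / (8 * u)) * bessel_series s u ^ 2)"

lemma bessel_energy_derivative_identity: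
  fixes u s Q Q' Q'' :: real
  assumes "u > 0" and "u * Q'' + (s + 1) * Q' + Q = 0"
  shows "(s + 1/2) / u * (u * Q'^2 + (s + 1/2) * Q * Q' + (1 + (2 * s + 1) / (8 * u)) * Q^2)
      + (Q'^2 + u * (2 * Q' * Q'') + (s + 1/2) * (Q' * Q' + Q * Q'')
         - (2 * s + 1) / (8 * u^2) * Q^2 + (1 + (2 * s + 1) / (8 * u)) * (2 * Q * Q'))
    = - (1 - 4 * s^2) / 16 * Q^2 / u^2"
proof -
  have "Q'' = - ((s + 1) * Q' + Q) / u"
    using assms by (simp add: field_simps)
  then show ?thesis
    unfolding \<open>Q'' = _\<close> using assms(1) by (simp add: field_simps power2_eq_square)
qed

lemma has_real_derivative_bessel_energy:
  assumes s: "s > -1" and u: "u > 0"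
  shows "(bessel_energy s has_real_derivative
           - (1 - 4 * s^2) / 16 * u powr (s + 1/2) * bessel_series s u ^ 2 / u^2) (at u)"
proof -
  let ?Q = "bessel_series s u" and ?Q' = "bessel_series' s u" and ?Q'' = "bessel_series'' s u"
  have "u powr (s + 1/2 - 1) = u powr (s + 1/2) / u"
    using u by (subst powr_diff) auto
  then have "((\<lambda>u. u powr (s + 1/2)) has_real_derivative (s + 1/2) / u * u powr (s + 1/2)) (at u)"
    using has_real_derivative_powr[OF u, of "s + 1/2"] by simp
  moreover have "((\<lambda>u. u * bessel_series' s u ^ 2
       + (s + 1/2) * bessel_series s u * bessel_series' s u
       + (1 + (2 * s + 1) / (8 * u)) * bessel_series s u ^ 2) has_real_derivative
      ?Q'^2 + u * (2 * ?Q' * ?Q'') + (s + 1/2) * (?Q' * ?Q' + ?Q * ?Q'')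
        - (2 * s + 1) / (8 * u^2) * ?Q^2 + (1 + (2 * s + 1) / (8 * u)) * (2 * ?Q * ?Q')) (at u)"
    using u by (auto intro!: derivative_eq_intros has_real_derivative_bessel_series[OF s]
        has_real_derivative_bessel_series'[OF s] simp: field_simps power2_eq_square)
  ultimately have "(bessel_energy s has_real_derivative u powr (s + 1/2) *
      ((s + 1/2) / u * (u * ?Q'^2 + (s + 1/2) * ?Q * ?Q' + (1 + (2 * s + 1) / (8 * u)) * ?Q^2)
      + (?Q'^2 + u * (2 * ?Q' * ?Q'') + (s + 1/2) * (?Q' * ?Q' + ?Q * ?Q'')
         - (2 * s + 1) / (8 * u^2) * ?Q^2 + (1 + (2 * s + 1) / (8 * u)) * (2 * ?Q * ?Q')))) (at u)"
    unfolding bessel_energy_def[abs_def]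
    by (rule DERIV_mult[THEN DERIV_cong]) (use u in \<open>simp add: field_simps\<close>)
  then show ?thesis
    unfolding bessel_energy_derivative_identity[OF u bessel_series_ode[OF s]] by (simp add: mult_ac)
qed

lemma bessel_energy_lower_bound:
  assumes "u > 0" and "\<bar>1 - 4 * s^2\<bar> \<le> 8 * u"
  shows "u powr (s + 1/2) * bessel_series s u ^ 2 \<le> 2 * bessel_energy s u"
proof -
  let ?P = "u powr (s + 1/2)" and ?Q = "bessel_series s u" and ?Q' = "bessel_series' s u"
  let ?c = "(1 - 4 * s^2) / 16"
  have square:
    "bessel_energy s u = ?P * (u * (?Q' + (2 * s + 1) / 4 * ?Q / u)^2 + (1 + ?c / u) * ?Q^2)"
    unfolding bessel_energy_def using assms(1) by (simp add: field_simps power2_eq_square)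
  have "\<bar>?c / u\<bar> \<le> 1/2"
    using assms by (simp add: abs_divide field_simps)
  then have "1/2 \<le> 1 + ?c / u"
    by linarith
  then have "1/2 * ?Q^2 \<le> (1 + ?c / u) * ?Q^2"
    by (intro mult_right_mono) auto
  also have "\<dots> \<le> u * (?Q' + (2 * s + 1) / 4 * ?Q / u)^2 + (1 + ?c / u) * ?Q^2"
    using assms(1) by simp
  finally have "?P * (1/2 * ?Q^2) \<le> bessel_energy s u"
    unfolding square by (intro mult_left_mono) auto
  then show ?thesis by simp
qed

lemma bessel_energy_weighted_antimono:
  fixes s a b :: real
  defines "D \<equiv> \<bar>1 - 4 * s^2\<bar> / 8"
  assumes s: "s > -1" and a: "a > 0" "D \<le> a" and ab: "a \<le> b"
  shows "bessel_energy s b * exp (D / b) \<le> bessel_energy s a * exp (D / a)"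
proof (rule DERIV_nonpos_imp_decreasing_open[OF ab])
  let ?E = "\<lambda>u. bessel_energy s u * exp (D / u)"
  have deriv: "(?E has_real_derivative exp (D / u) *
      (- (1 - 4 * s^2) / 16 * u powr (s + 1/2) * bessel_series s u ^ 2 / u^2
       - D * bessel_energy s u / u^2)) (at u)"
    if "u > 0" for u
  proof -
    have "((\<lambda>u. exp (D / u)) has_real_derivative exp (D / u) * (- D / u^2)) (at u)"
      using that by (auto intro!: derivative_eq_intros simp: power2_eq_square)
    from DERIV_mult[OF has_real_derivative_bessel_energy[OF s that] this]
    show ?thesis
      by (rule DERIV_cong) (simp add: algebra_simps)
  qed
  show "continuous_on {a..b} ?E"
    using a by (intro continuous_at_imp_continuous_on ballI DERIV_isCont[OF deriv]) auto
  fix u assume u: "a < u" "u < b"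
  then have "u > 0" "\<bar>1 - 4 * s^2\<bar> \<le> 8 * u"
    using a by (auto simp: D_def)
  note lower = bessel_energy_lower_bound[OF this]
  have "- (1 - 4 * s^2) / 16 * u powr (s + 1/2) * bessel_series s u ^ 2
      \<le> \<bar>1 - 4 * s^2\<bar> / 16 * (u powr (s + 1/2) * bessel_series s u ^ 2)"
    unfolding mult.assoc
    by (intro mult_right_mono) (use abs_ge_minus_self[of "1 - 4 * s^2"] in auto)
  also have "\<dots> \<le> \<bar>1 - 4 * s^2\<bar> / 16 * (2 * bessel_energy s u)"
    by (intro mult_left_mono lower) auto
  also have "\<dots> = D * bessel_energy s u"
    by (simp add: D_def)
  finally have "- (1 - 4 * s^2) / 16 * u powr (s + 1/2) * bessel_series s u ^ 2 / u^2
      \<le> D * bessel_energy s u / u^2"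
    by (rule divide_right_mono) simp
  then have "exp (D / u) *
      (- (1 - 4 * s^2) / 16 * u powr (s + 1/2) * bessel_series s u ^ 2 / u^2
       - D * bessel_energy s u / u^2) \<le> 0"
    by (intro mult_nonneg_nonpos) auto
  then show "\<exists>y. (?E has_real_derivative y) (at u) \<and> y \<le> 0"
    using deriv \<open>u > 0\<close> by blast
qed

lemma bessel_series_decay:
  assumes s: "s > -1"
  shows "\<exists>M u0. u0 > 0 \<and> (\<forall>u\<ge>u0. u powr (s + 1/2) * bessel_series s u ^ 2 \<le> M)"
proof -
  define D where "D = \<bar>1 - 4 * s^2\<bar> / 8"
  define u0 where "u0 = max 1 D"
  have "u powr (s + 1/2) * bessel_series s u ^ 2 \<le> 2 * (bessel_energy s u0 * exp (D / u0))"
    if u: "u \<ge> u0" for u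
  proof -
    have "u > 0" "\<bar>1 - 4 * s^2\<bar> \<le> 8 * u"
      using u by (auto simp: u0_def D_def)
    note lower = bessel_energy_lower_bound[OF this]
    moreover have "u powr (s + 1/2) * bessel_series s u ^ 2 \<ge> 0"
      by simp
    ultimately have "bessel_energy s u \<ge> 0"
      by linarith
    moreover have "exp (D / u) \<ge> 1"
      using \<open>u > 0\<close> by (simp add: D_def)
    ultimately have "bessel_energy s u \<le> bessel_energy s u * exp (D / u)"
      by (simp add: mult_le_cancel_left1)
    also have "\<dots> \<le> bessel_energy s u0 * exp (D / u0)"
      using u unfolding D_def by (intro bessel_energy_weighted_antimono s) (auto simp: u0_def D_def)
    finally show ?thesis
      using lower by linarith
  qed
  then show ?thesis
    by (intro exI[of _ "2 * (bessel_energy s u0 * exp (D / u0))"] exI[of _ u0]) (auto simp: u0_def)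
qed

definition bessel_square :: "real \<Rightarrow> real \<Rightarrow> real" where
  "bessel_square s v = v powr s * bessel_series s v ^ 2"

lemma besselJ_two_sqrt_square:
  assumes "s > -1" and "v \<ge> 0"
  shows "besselJ s (2 * sqrt v) ^ 2 = bessel_square s v"
proof -
  have "besselJ s (2 * sqrt v) = sqrt v powr s * bessel_series s v"
    using besselJ_eq_bessel_series[OF assms(1), of "2 * sqrt v"] assms(2)
    by (simp add: power_mult_distrib)
  moreover have "(sqrt v powr s)^2 = v powr s"
    unfolding power2_eq_square powr_mult[symmetric] using assms(2) by simp
  ultimately show ?thesis
    unfolding bessel_square_def by (simp add: power_mult_distrib)
qed

lemma bessel_square_nonneg: "bessel_square s v \<ge> 0"
  unfolding bessel_square_def by simp

lemma bessel_square_bound: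
  assumes s: "s > -1"
  shows "\<exists>A\<ge>0. \<forall>v\<ge>0. bessel_square s v \<le> A * (v powr (-1/2) + v powr min s (-1/2))"
proof -
  let ?\<sigma> = "min s (-1/2)"
  obtain M u0 where u0: "u0 > 0"
    and M: "\<And>u. u \<ge> u0 \<Longrightarrow> u powr (s + 1/2) * bessel_series s u ^ 2 \<le> M"
    using bessel_series_decay[OF s] by blast
  have "0 \<le> u0 powr (s + 1/2) * bessel_series s u0 ^ 2"
    by simp
  with M[of u0] have "M \<ge> 0"
    by linarith
  have "bounded (bessel_series s ` {0..u0})"
    by (intro compact_imp_bounded compact_continuous_image continuous_on_bessel_series s) auto
  then obtain B where "\<forall>y\<in>bessel_series s ` {0..u0}. norm y \<le> B"
    unfolding bounded_iff by blast
  then have B: "\<And>v. v \<in> {0..u0} \<Longrightarrow> \<bar>bessel_series s v\<bar> \<le> B"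
    by auto
  define A where "A = max M (B^2 * u0 powr (s - ?\<sigma>))"
  have "A \<ge> 0"
    using \<open>M \<ge> 0\<close> by (simp add: A_def)
  have "bessel_square s v \<le> A * (v powr (-1/2) + v powr ?\<sigma>)" if v: "v \<ge> 0" for v
  proof (cases "v \<ge> u0")
    case True
    then have "bessel_square s v = v powr (-1/2) * (v powr (s + 1/2) * bessel_series s v ^ 2)"
      using u0 by (simp add: bessel_square_def powr_add[symmetric] mult.assoc[symmetric])
    also have "\<dots> \<le> v powr (-1/2) * A"
      using M[OF True] by (intro mult_left_mono) (auto simp: A_def)
    finally show ?thesis
      using \<open>A \<ge> 0\<close> by (simp add: algebra_simps add_increasing2)
  next
    case False
    have "\<bar>bessel_series s v\<bar> \<le> B"
      using B v False by simp
    from power_mono[OF this abs_ge_zero, of 2]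
    have "bessel_series s v ^ 2 \<le> B^2"
      by simp
    moreover have "v powr s \<le> v powr ?\<sigma> * u0 powr (s - ?\<sigma>)"
    proof -
      have "v powr s = v powr ?\<sigma> * v powr (s - ?\<sigma>)"
        by (simp add: powr_add[symmetric])
      also have "\<dots> \<le> v powr ?\<sigma> * u0 powr (s - ?\<sigma>)"
        using False v by (intro mult_left_mono powr_mono2) auto
      finally show ?thesis .
    qed
    ultimately have "bessel_square s v \<le> (v powr ?\<sigma> * u0 powr (s - ?\<sigma>)) * B^2"
      unfolding bessel_square_def by (intro mult_mono) auto
    also have "\<dots> = v powr ?\<sigma> * (B^2 * u0 powr (s - ?\<sigma>))"
      by simp
    also have "\<dots> \<le> v powr ?\<sigma> * A"
      by (intro mult_left_mono) (auto simp: A_def)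
    finally show ?thesis
      using \<open>A \<ge> 0\<close> by (simp add: algebra_simps add_increasing)
  qed
  with \<open>A \<ge> 0\<close> show ?thesis by blast
qed

lemma integrable_on_Icc_iff_Ioc:
  fixes f :: "real \<Rightarrow> 'a::banach"
  shows "f integrable_on {a..b} \<longleftrightarrow> f integrable_on {a<..b}"
  by (rule integrable_spike_set_eq) (rule negligible_subset[of "{a}"], auto)

lemma integral_Icc_eq_Ioc:
  fixes f :: "real \<Rightarrow> 'a::banach"
  shows "integral {a..b} f = integral {a<..b} f"
  by (rule integral_spike_set) (rule negligible_subset[of "{a}"], auto)+

lemma integrable_on_Icc_if_dominated:
  fixes f g :: "real \<Rightarrow> real"
  assumes "continuous_on {a<..b} f" and "g integrable_on {a..b}"
    and "\<And>x. x \<in> {a<..b} \<Longrightarrow> \<bar>f x\<bar> \<le> g x"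
  shows "f integrable_on {a..b}"
  unfolding integrable_on_Icc_iff_Ioc
  by (rule measurable_bounded_by_integrable_imp_integrable_real
      [OF continuous_imp_measurable_on_sets_lebesgue[OF assms(1)]])
     (use assms(2,3) integrable_on_Icc_iff_Ioc in auto)

lemma integrable_on_bessel_square:
  assumes "s > -1"
  shows "bessel_square s integrable_on {0..R}"
proof -
  obtain A where bound:
      "\<And>v. v \<ge> 0 \<Longrightarrow> bessel_square s v \<le> A * (v powr (-1/2) + v powr min s (-1/2))"
    using bessel_square_bound[OF assms] by blast
  show ?thesis
  proof (cases "R \<ge> 0")
    case True
    show ?thesis
    proof (rule integrable_on_Icc_if_dominated)
      show "continuous_on {0<..R} (bessel_square s)"
        unfolding bessel_square_def by (intro continuous_intros continuous_on_bessel_series assms) auto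
      show "(\<lambda>v. A * (v powr (-1/2) + v powr min s (-1/2))) integrable_on {0..R}"
        using True assms
        by (intro integrable_on_mult_right integrable_add integrable_on_powr_from_0) auto
      show "\<bar>bessel_square s v\<bar> \<le> A * (v powr (-1/2) + v powr min s (-1/2))"
        if "v \<in> {0<..R}" for v
        using bound[of v] bessel_square_nonneg[of s v] that by simp
    qed
  qed (simp add: integrable_on_empty)
qed

lemma integral_bessel_square_le:
  assumes s: "s > -1"
  shows "\<exists>K\<ge>0. \<forall>R\<ge>1. integral {0..R} (bessel_square s) \<le> K * R powr (1/2)"
proof -
  define \<sigma> where "\<sigma> = min s (-1/2)"
  obtain A where "A \<ge> 0"
    and bound: "\<And>v. v \<ge> 0 \<Longrightarrow> bessel_square s v \<le> A * (v powr (-1/2) + v powr \<sigma>)"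
    using bessel_square_bound[OF s] unfolding \<sigma>_def by blast
  have \<sigma>: "-1 < \<sigma>" "\<sigma> \<le> -1/2"
    using s by (auto simp: \<sigma>_def)
  define K where "K = A * (2 + 1 / (\<sigma> + 1))"
  have "integral {0..R} (bessel_square s) \<le> K * R powr (1/2)" if R: "R \<ge> 1" for R
  proof -
    have "((\<lambda>v. A * (v powr (-1/2) + v powr \<sigma>)) has_integral
        A * (R powr (-1/2 + 1) / (-1/2 + 1) + R powr (\<sigma> + 1) / (\<sigma> + 1))) {0..R}"
      using R \<sigma> by (intro has_integral_mult_right has_integral_add has_integral_powr_from_0) auto
    then have "integral {0..R} (bessel_square s)
        \<le> A * (R powr (-1/2 + 1) / (-1/2 + 1) + R powr (\<sigma> + 1) / (\<sigma> + 1))"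
      by (rule has_integral_le[OF integrable_integral[OF integrable_on_bessel_square[OF s]]])
         (use bound in auto)
    also have "\<dots> = A * (2 * R powr (1/2) + R powr (\<sigma> + 1) / (\<sigma> + 1))"
      by simp
    also have "\<dots> \<le> A * (2 * R powr (1/2) + R powr (1/2) / (\<sigma> + 1))"
      using R \<sigma> \<open>A \<ge> 0\<close> by (intro mult_left_mono add_left_mono divide_right_mono powr_mono) auto
    also have "\<dots> = K * R powr (1/2)"
      by (simp add: K_def algebra_simps)
    finally show ?thesis .
  qed
  moreover have "K \<ge> 0"
    using \<open>A \<ge> 0\<close> \<sigma> by (simp add: K_def)
  ultimately show ?thesis by blast
qed

lemma modBesselKernel_diag_eq:
  assumes s: "s > -1" and x: "x > 0"
  shows "x * modBesselKernel s x x = integral {0..1/x} (bessel_square s)"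
proof -
  have pointwise: "besselJ s (sqrt (t * (4 / x))) * besselJ s (sqrt (t * (4 / x)))
      = bessel_square s (1 / x * t)" if "t \<in> {0..1}" for t
  proof -
    have "sqrt (t * (4 / x)) = sqrt (2^2 * (t / x))"
      by simp
    also have "\<dots> = 2 * sqrt (t / x)"
      unfolding real_sqrt_mult real_sqrt_abs by simp
    finally have "sqrt (t * (4 / x)) = 2 * sqrt (t / x)" .
    then show ?thesis
      using besselJ_two_sqrt_square[OF s, of "t / x"] that x by (simp add: power2_eq_square)
  qed
  have "x * modBesselKernel s x x = x * (4 / (x * x)) * (1 / 4) *
      integral {0..1} (\<lambda>t. besselJ s (sqrt (t * (4 / x))) * besselJ s (sqrt (t * (4 / x))))"
    unfolding modBesselKernel_def besselKernel_def by simp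
  also have "integral {0..1} (\<lambda>t. besselJ s (sqrt (t * (4 / x))) * besselJ s (sqrt (t * (4 / x))))
      = integral {0..1} (\<lambda>t. bessel_square s (1 / x * t))"
    by (rule integral_cong) (rule pointwise)
  also have "integral {0..1} (\<lambda>t. bessel_square s (1 / x * t))
      = x * integral {0..1/x} (bessel_square s)"
    using integral_stretch_real[where m = "1 / x" and f = "bessel_square s" and a = 0 and b = "1 / x"] x
    by (simp add: image_mult_atLeastAtMost_if')
  finally show ?thesis
    using x by (simp add: field_simps)
qed

lemma continuous_on_modBesselKernel_diag:
  assumes s: "s > -1"
  shows "continuous_on {0<..} (\<lambda>x. x * modBesselKernel s x x)"
proof -
  have cont: "isCont (\<lambda>R. integral {0..R} (bessel_square s)) R" if "R > 0" for R
  proof -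
    have "continuous_on {0..R + 1} (\<lambda>R. integral {0..R} (bessel_square s))"
      by (intro indefinite_integral_continuous_1 integrable_on_bessel_square s)
    moreover have "R \<in> interior {0..R + 1}"
      using that by simp
    ultimately show ?thesis
      using continuous_on_interior by blast
  qed
  have "isCont (\<lambda>x. integral {0..1/x} (bessel_square s)) x" if "x > 0" for x
  proof (rule isCont_o2[where f = "\<lambda>x. 1 / x"])
    show "isCont (\<lambda>x. 1 / x) x"
      using that by (intro continuous_intros) simp
    show "isCont (\<lambda>R. integral {0..R} (bessel_square s)) (1 / x)"
      using that by (intro cont) simp
  qed
  then have "continuous_on {0<..} (\<lambda>x. integral {0..1/x} (bessel_square s))"
    by (intro continuous_at_imp_continuous_on) auto
  then show ?thesis
    by (rule continuous_on_cong[THEN iffD1, rotated 2]) (auto simp: modBesselKernel_diag_eq[OF s])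
qed

lemma modBesselKernel_diag_bound:
  assumes s: "s > -1"
  shows "\<exists>K. \<forall>x. 0 < x \<longrightarrow> x \<le> 1 \<longrightarrow> \<bar>x * modBesselKernel s x x\<bar> \<le> K * x powr (-1/2)"
proof -
  obtain K where K: "\<And>R. R \<ge> 1 \<Longrightarrow> integral {0..R} (bessel_square s) \<le> K * R powr (1/2)"
    using integral_bessel_square_le[OF s] by blast
  have "\<bar>x * modBesselKernel s x x\<bar> \<le> K * x powr (-1/2)" if x: "0 < x" "x \<le> 1" for x
  proof -
    have "integral {0..1/x} (bessel_square s) \<ge> 0"
      by (intro integral_nonneg integrable_on_bessel_square s bessel_square_nonneg)
    moreover have "integral {0..1/x} (bessel_square s) \<le> K * (1/x) powr (1/2)"
      using x by (intro K) simp
    moreover have "(1/x) powr (1/2) = x powr (-1/2)"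
      using x by (simp add: powr_minus_divide powr_divide)
    ultimately show ?thesis
      using modBesselKernel_diag_eq[OF s x(1)] by simp
  qed
  then show ?thesis by blast
qed

lemma small_integral_near_0:
  fixes g :: "real \<Rightarrow> real"
  assumes cont: "continuous_on {0<..1} g"
    and bound: "\<And>x. 0 < x \<Longrightarrow> x \<le> 1 \<Longrightarrow> \<bar>g x\<bar> \<le> K * x powr (-1/2)"
    and \<epsilon>: "\<epsilon> > 0"
  shows "\<exists>\<delta>>0. g integrable_on {0..\<delta>} \<and> integral {0..\<delta>} g < \<epsilon>"
proof -
  have "K \<ge> 0"
    using bound[of 1] by simp
  define \<delta> where "\<delta> = min 1 ((\<epsilon> / (2 * K + 1))^2)"
  have \<delta>: "0 < \<delta>" "\<delta> \<le> 1"
    using \<epsilon> \<open>K \<ge> 0\<close> by (simp_all add: \<delta>_def)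
  have majorant: "((\<lambda>x. K * x powr (-1/2)) has_integral 2 * K * \<delta> powr (1/2)) {0..\<delta>}"
    using has_integral_mult_right[OF has_integral_powr_from_0[of "-1/2" \<delta>], of K] \<delta>
    by (simp add: mult_ac)
  have "g integrable_on {0..\<delta>}"
  proof (rule integrable_on_Icc_if_dominated)
    show "continuous_on {0<..\<delta>} g"
      by (rule continuous_on_subset[OF cont]) (use \<delta> in auto)
    show "(\<lambda>x. K * x powr (-1/2)) integrable_on {0..\<delta>}"
      using majorant by blast
    show "\<bar>g x\<bar> \<le> K * x powr (-1/2)" if "x \<in> {0<..\<delta>}" for x
      using bound that \<delta> by simp
  qed
  have "integral {0..\<delta>} g = integral {0<..\<delta>} g"
    by (rule integral_Icc_eq_Ioc)
  also have "\<dots> \<le> integral {0<..\<delta>} (\<lambda>x. K * x powr (-1/2))"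
  proof (rule integral_le)
    show "g integrable_on {0<..\<delta>}"
      using \<open>g integrable_on {0..\<delta>}\<close> by (simp only: integrable_on_Icc_iff_Ioc)
    show "(\<lambda>x. K * x powr (-1/2)) integrable_on {0<..\<delta>}"
      using majorant integrable_on_Icc_iff_Ioc by blast
    show "g x \<le> K * x powr (-1/2)" if "x \<in> {0<..\<delta>}" for x
      using bound[of x] that \<delta> by (simp add: abs_le_iff)
  qed
  also have "\<dots> = 2 * K * \<delta> powr (1/2)"
    unfolding integral_Icc_eq_Ioc[symmetric] using majorant by (rule integral_unique)
  also have "\<dots> \<le> 2 * K * (\<epsilon> / (2 * K + 1))"
  proof -
    have "\<delta> powr (1/2) = sqrt \<delta>"
      using \<delta> by (simp add: powr_half_sqrt)
    also have "\<dots> \<le> sqrt ((\<epsilon> / (2 * K + 1))^2)"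
      unfolding \<delta>_def by (rule real_sqrt_le_mono) simp
    also have "\<dots> = \<epsilon> / (2 * K + 1)"
      using \<epsilon> \<open>K \<ge> 0\<close> by simp
    finally show ?thesis
      using \<open>K \<ge> 0\<close> by (intro mult_left_mono) auto
  qed
  also have "\<dots> < \<epsilon>"
    using \<epsilon> \<open>K \<ge> 0\<close> by (simp add: field_simps)
  finally show ?thesis
    using \<open>g integrable_on {0..\<delta>}\<close> \<delta> by blast
qed

theorem mainTheorem4:
  fixes s \<epsilon> :: real
  assumes "s > -1" and "\<epsilon> > 0"
  shows "\<exists>\<delta>>0. (\<lambda>x. x * modBesselKernel s x x) integrable_on {0..\<delta>} \<and>
               integral {0..\<delta>} (\<lambda>x. x * modBesselKernel s x x) < \<epsilon>"
proof -
  obtain K where "\<And>x. 0 < x \<Longrightarrow> x \<le> 1 \<Longrightarrow> \<bar>x * modBesselKernel s x x\<bar> \<le> K * x powr (-1/2)"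
    using modBesselKernel_diag_bound[OF assms(1)] by blast
  moreover have "continuous_on {0<..1} (\<lambda>x. x * modBesselKernel s x x)"
    using continuous_on_modBesselKernel_diag[OF assms(1)] by (rule continuous_on_subset) auto
  ultimately show ?thesis
    using assms(2) by (intro small_integral_near_0)
qed

end
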